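(* Assume $\mathbb{E}\min(Z,W)=\infty$. Then, with probability one, $\liminf_{n\to\infty}\Lambda_n<\infty$.
   Context: Let $Z,W,(Z_n)_{n\ge1},(W_n)_{n\ge1}$ be independent, identically distributed random variables taking values in $\mathbb{N}=\{1,2,3,\dots\}$. Define sets $T_n\subset\mathbb{Z}$ recursively by $T_n=\{n\}$ for $n\le 0$ and $T_n=\{n\}\cup T_{n-Z_n}\cup T_{n-W_n}$ for $n\ge1$. Let $\mathcal{L}_n=T_n\cap\{0,-1,-2,\dots\}$ and $\Lambda_n=|\mathcal{L}_n|$. *)

theory Defs
  imports "HOL-Probability.Probability"
begin

text \<open>Membership in the random tree T_n for a fixed outcome, with
  zs k = Z_k, ws k = W_k.  T_n = {n} for n \<le> 0 and
  T_n = {n} \<union> T_(n - Z_n) \<union> T_(n - W_n) for n \<ge> 1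
  (the recursion is well-founded since Z_n, W_n \<ge> 1; we take it as the
  least set satisfying these rules).\<close>
inductive inT :: "(nat \<Rightarrow> nat) \<Rightarrow> (nat \<Rightarrow> nat) \<Rightarrow> int \<Rightarrow> int \<Rightarrow> bool"
  for zs ws :: "nat \<Rightarrow> nat" where
  self: "inT zs ws n n"
| left: "n \<ge> 1 \<Longrightarrow> inT zs ws (n - int (zs (nat n))) m \<Longrightarrow> inT zs ws n m"
| right: "n \<ge> 1 \<Longrightarrow> inT zs ws (n - int (ws (nat n))) m \<Longrightarrow> inT zs ws n m"

definition Tset :: "(nat \<Rightarrow> nat) \<Rightarrow> (nat \<Rightarrow> nat) \<Rightarrow> int \<Rightarrow> int set" where
  "Tset zs ws n = {m. inT zs ws n m}"

definition Lambda :: "(nat \<Rightarrow> nat) \<Rightarrow> (nat \<Rightarrow> nat) \<Rightarrow> int \<Rightarrow> nat" where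
  "Lambda zs ws n = card (Tset zs ws n \<inter> {..0})"

text \<open>The whole family (Z, W, Z_1, W_1, Z_2, W_2, ...) indexed by bool \<times> nat:
  index (True,0) is Z, (False,0) is W, (True,n) is Z_n and (False,n) is W_n for n \<ge> 1.\<close>
definition fam :: "('a \<Rightarrow> nat) \<Rightarrow> ('a \<Rightarrow> nat) \<Rightarrow> (nat \<Rightarrow> 'a \<Rightarrow> nat) \<Rightarrow> (nat \<Rightarrow> 'a \<Rightarrow> nat)
    \<Rightarrow> bool \<times> nat \<Rightarrow> 'a \<Rightarrow> nat" where
  "fam Z W Zs Ws i = (case i of (b, n) \<Rightarrow>
     if n = 0 then (if b then Z else W) else (if b then Zs n else Ws n))"

end

theory Submission
  imports Defs
begin

text \<open>Let \<open>A\<^sub>n\<close> be the event \<open>Z\<^sub>n \<ge> n \<and> W\<^sub>n \<ge> n\<close>. On \<open>A\<^sub>n\<close> both jumps from \<open>n\<close> land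
  in \<open>{..0}\<close>, where the recursion stops, so \<open>\<Lambda>\<^sub>n \<le> 2\<close>. The events \<open>A\<^sub>n\<close> are independent and
  \<open>P(A\<^sub>n) = P(Z \<ge> n)\<^sup>2 = P(min Z W \<ge> n)\<close>, so \<open>\<Sum>\<^sub>n\<^sub>\<ge>\<^sub>1 P(A\<^sub>n) = E min(Z, W) = \<infinity>\<close>.
  By the second Borel--Cantelli lemma \<open>A\<^sub>n\<close> occurs infinitely often almost surely, and then
  \<open>liminf \<Lambda>\<^sub>n \<le> 2\<close>.\<close>

lemma Liminf_le_if_frequently:
  fixes f :: "'a \<Rightarrow> 'b::complete_linorder"
  assumes "\<exists>\<^sub>F x in F. f x \<le> c"
  shows "Liminf F f \<le> c"
proof (rule ccontr)
  assume "\<not> Liminf F f \<le> c"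
  then have "c < Liminf F f"
    by simp
  then have "\<forall>\<^sub>F x in F. c < f x"
    using le_Liminf_iff[THEN iffD1, OF order_refl] by blast
  then show False
    using assms by (simp add: frequently_def not_le)
qed

lemma prod_one_minus_le_exp_neg_sum:
  fixes q :: "'a \<Rightarrow> real"
  assumes "\<And>n. n \<in> A \<Longrightarrow> q n \<le> 1"
  shows "(\<Prod>n\<in>A. 1 - q n) \<le> exp (- (\<Sum>n\<in>A. q n))"
proof (cases "finite A")
  case True
  have "(\<Prod>n\<in>A. 1 - q n) \<le> (\<Prod>n\<in>A. exp (- q n))"
    using assms by (intro prod_mono) (auto intro: exp_minus_ge)
  also have "\<dots> = exp (- (\<Sum>n\<in>A. q n))"
    using True by (simp add: exp_sum sum_negf[symmetric])
  finally show ?thesis .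
qed simp

lemma not_summable_imp_tail_sum_ge:
  fixes q :: "nat \<Rightarrow> real"
  assumes "\<And>n. 0 \<le> q n" "\<not> summable q"
  shows "\<exists>K. B \<le> (\<Sum>n=N..K. q n)"
proof (rule ccontr)
  assume "\<not> ?thesis"
  then have tail: "(\<Sum>n=N..K. q n) < B" for K
    by (meson not_le)
  have "summable q"
  proof (rule bounded_imp_summable)
    show "0 \<le> q n" for n by fact
    show "(\<Sum>k\<le>n. q k) \<le> (\<Sum>k<N. q k) + B" for n
    proof -
      have "(\<Sum>k\<le>n. q k) \<le> (\<Sum>k\<in>{..<N} \<union> {N..n}. q k)"
        by (rule sum_mono2) (auto intro: assms)
      also have "\<dots> = (\<Sum>k<N. q k) + (\<Sum>k=N..n. q k)"
        by (rule sum.union_disjoint) auto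
      finally show ?thesis
        using tail[of n] by simp
    qed
  qed
  with assms show False by simp
qed

lemma (in prob_space) indep_events_compl:
  assumes "indep_events A I"
  shows "indep_events (\<lambda>i. space M - A i) I"
proof -
  have "indep_sets (\<lambda>i. sigma_sets (space M) {A i}) I"
    using assms unfolding indep_events_def_alt by (rule indep_sets_sigma) (simp add: Int_stable_def)
  then show ?thesis
    unfolding indep_events_def_alt by (rule indep_sets_mono_sets) (auto intro: sigma_sets.intros)
qed

lemma (in prob_space) prob_eventually_not_in_eq_0:
  assumes indep: "indep_events A UNIV" and nsum: "\<not> summable (\<lambda>n. prob (A n))"
  shows "prob (\<Inter>n\<in>{N..}. space M - A n) = 0"
proof -
  let ?S = "\<Inter>n\<in>{N..}. space M - A n"
  have ev: "A n \<in> events" for n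
    using indep by (auto simp: indep_events_def)
  have indep_compl: "indep_events (\<lambda>n. space M - A n) UNIV"
    using indep by (rule indep_events_compl)
  have "prob ?S \<le> \<epsilon>" if "0 < \<epsilon>" for \<epsilon>
  proof -
    obtain K where K: "- ln \<epsilon> \<le> (\<Sum>n=N..K. prob (A n))"
      using not_summable_imp_tail_sum_ge[OF _ nsum] by auto
    have "prob ?S \<le> (\<Prod>n=N..K. 1 - prob (A n))"
    proof (cases "N \<le> K")
      case True
      have "?S \<subseteq> (\<Inter>n\<in>{N..K}. space M - A n)"
        using True by auto
      moreover have "(\<Inter>n\<in>{N..K}. space M - A n) \<in> events"
        using True ev by (intro sets.finite_INT) auto
      ultimately have "prob ?S \<le> prob (\<Inter>n\<in>{N..K}. space M - A n)"
        by (rule finite_measure_mono)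
      also have "\<dots> = (\<Prod>n=N..K. prob (space M - A n))"
        using indep_compl[unfolded indep_events_def] True by simp
      finally show ?thesis
        by (simp add: prob_compl ev)
    qed simp
    also have "\<dots> \<le> exp (- (\<Sum>n=N..K. prob (A n)))"
      by (rule prod_one_minus_le_exp_neg_sum) simp
    also have "\<dots> \<le> exp (ln \<epsilon>)"
      using K by simp
    also have "\<dots> = \<epsilon>"
      using that by simp
    finally show ?thesis .
  qed
  then have "prob ?S \<le> 0"
    by (rule dense_ge)
  then show ?thesis
    using measure_nonneg[of M ?S] by linarith
qed

lemma (in prob_space) borel_cantelli_AE2:
  assumes indep: "indep_events A UNIV" and nsum: "\<not> summable (\<lambda>n. prob (A n))"
  shows "AE \<omega> in M. \<exists>\<^sub>F n in sequentially. \<omega> \<in> A n"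
proof -
  have "AE \<omega> in M. \<exists>n\<ge>N. \<omega> \<in> A n" for N
  proof (rule AE_I')
    show "(\<Inter>n\<in>{N..}. space M - A n) \<in> null_sets M"
      using indep prob_eventually_not_in_eq_0[OF indep nsum]
      by (auto simp: indep_events_def emeasure_eq_measure null_sets_def)
  qed auto
  then show ?thesis
    by (simp add: frequently_sequentially AE_all_countable)
qed

lemma (in prob_space) nn_integral_nat_eq_suminf_prob:
  fixes X :: "'a \<Rightarrow> nat"
  assumes X: "random_variable (count_space UNIV) X"
  shows "(\<integral>\<^sup>+ \<omega>. ennreal (real (X \<omega>)) \<partial>M) = (\<Sum>n. ennreal (prob {\<omega>\<in>space M. Suc n \<le> X \<omega>}))"
proof -
  have ev: "{\<omega>\<in>space M. Suc n \<le> X \<omega>} \<in> events" for n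
    using X by measurable
  have "ennreal (real (X \<omega>)) = (\<Sum>n. indicator {\<omega>\<in>space M. Suc n \<le> X \<omega>} \<omega>)" if "\<omega> \<in> space M" for \<omega>
  proof -
    have "(\<Sum>n. indicator {\<omega>\<in>space M. Suc n \<le> X \<omega>} \<omega> :: ennreal) = (\<Sum>n<X \<omega>. 1)"
      using that by (subst suminf_finite[of "{..<X \<omega>}"]) (auto simp: indicator_def)
    then show ?thesis
      by (simp add: ennreal_of_nat_eq_real_of_nat)
  qed
  then have "(\<integral>\<^sup>+ \<omega>. ennreal (real (X \<omega>)) \<partial>M)
      = (\<integral>\<^sup>+ \<omega>. (\<Sum>n. indicator {\<omega>\<in>space M. Suc n \<le> X \<omega>} \<omega>) \<partial>M)"
    by (rule nn_integral_cong)
  also have "\<dots> = (\<Sum>n. emeasure M {\<omega>\<in>space M. Suc n \<le> X \<omega>})"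
    using ev by (simp add: nn_integral_suminf)
  finally show ?thesis
    by (simp add: emeasure_eq_measure ev)
qed

lemma (in prob_space) prob_both_ge_eq_square:
  fixes X :: "'i \<Rightarrow> 'a \<Rightarrow> 'b::linorder"
  assumes indep: "indep_vars (\<lambda>_. count_space UNIV) X I"
    and ident: "\<And>i. i \<in> I \<Longrightarrow> distr M (count_space UNIV) (X i) = distr M (count_space UNIV) Y"
    and Y: "random_variable (count_space UNIV) Y"
    and ij: "i \<in> I" "j \<in> I" "i \<noteq> j"
  shows "prob {\<omega>\<in>space M. k \<le> X i \<omega> \<and> k \<le> X j \<omega>} = prob {\<omega>\<in>space M. k \<le> Y \<omega>} ^ 2"
proof -
  have marginal: "prob (X l -` {k..} \<inter> space M) = prob {\<omega>\<in>space M. k \<le> Y \<omega>}" if "l \<in> I" for l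
  proof -
    have X: "random_variable (count_space UNIV) (X l)"
      using indep that by (simp add: indep_vars_def)
    have "prob (X l -` {k..} \<inter> space M) = measure (distr M (count_space UNIV) (X l)) {k..}"
      using X by (simp add: measure_distr)
    also have "\<dots> = measure (distr M (count_space UNIV) Y) {k..}"
      using ident that by simp
    also have "\<dots> = prob {\<omega>\<in>space M. k \<le> Y \<omega>}"
      using Y by (simp add: measure_distr vimage_def Int_def conj_commute)
    finally show ?thesis .
  qed
  have "prob {\<omega>\<in>space M. k \<le> X i \<omega> \<and> k \<le> X j \<omega>} = prob (\<Inter>l\<in>{i, j}. X l -` {k..} \<inter> space M)"
    by (intro arg_cong[where f=prob]) auto
  also have "\<dots> = (\<Prod>l\<in>{i, j}. prob (X l -` {k..} \<inter> space M))"
    using indep ij by (intro indep_varsD) auto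
  also have "\<dots> = prob {\<omega>\<in>space M. k \<le> Y \<omega>} ^ 2"
    using ij by (simp add: marginal power2_eq_square)
  finally show ?thesis .
qed

lemma (in prob_space) indep_events_pairs:
  fixes X :: "bool \<times> nat \<Rightarrow> 'a \<Rightarrow> 'b::countable"
  assumes "indep_vars (\<lambda>_. count_space UNIV) X UNIV"
  shows "indep_events (\<lambda>n. {\<omega>\<in>space M. P n (X (True, n) \<omega>) (X (False, n) \<omega>)}) UNIV"
proof -
  define K where "K n = {(True, n), (False, n)}" for n :: nat
  have "indep_vars (\<lambda>n. PiM (K n) (\<lambda>_. count_space UNIV)) (\<lambda>n \<omega>. restrict (\<lambda>i. X i \<omega>) (K n)) UNIV"
    using assms by (rule indep_vars_restrict) (auto simp: K_def disjoint_family_on_def)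
  then have "indep_events (\<lambda>n. {\<omega>\<in>space M. P n (restrict (\<lambda>i. X i \<omega>) (K n) (True, n))
      (restrict (\<lambda>i. X i \<omega>) (K n) (False, n))}) UNIV"
  proof (rule indep_eventsI_indep_vars)
    fix n
    have "(\<lambda>x. x i) \<in> PiM (K n) (\<lambda>_. count_space UNIV) \<rightarrow>\<^sub>M count_space UNIV" if "i \<in> K n" for i
      using that by (rule measurable_component_singleton)
    then have "Measurable.pred (PiM (K n) (\<lambda>_. count_space UNIV)) (\<lambda>x. P n (x (True, n)) (x (False, n)))"
      by (rule_tac measurable_compose_countable[where f="\<lambda>a x. P n a (x (False, n))"],
          rule_tac measurable_compose_countable[where f="\<lambda>b x. P n a b" for a])
        (simp_all add: K_def)
    then show "{x \<in> space (PiM (K n) (\<lambda>_. count_space UNIV)). P n (x (True, n)) (x (False, n))}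
        \<in> sets (PiM (K n) (\<lambda>_. count_space UNIV))"
      by (rule predE)
  qed
  then show ?thesis by (simp add: K_def)
qed

lemma (in prob_space) AE_frequently_pair_ge_index:
  fixes X :: "bool \<times> nat \<Rightarrow> 'a \<Rightarrow> nat"
  assumes indep: "indep_vars (\<lambda>_. count_space UNIV) X UNIV"
    and ident: "\<And>i. distr M (count_space UNIV) (X i) = distr M (count_space UNIV) (X (True, 0))"
    and inf_mean: "(\<integral>\<^sup>+ \<omega>. ennreal (real (min (X (True, 0) \<omega>) (X (False, 0) \<omega>))) \<partial>M) = \<infinity>"
  shows "AE \<omega> in M. \<exists>\<^sub>F n in sequentially. n \<le> X (True, n) \<omega> \<and> n \<le> X (False, n) \<omega>"
proof -
  define A where "A n = {\<omega>\<in>space M. n \<le> X (True, n) \<omega> \<and> n \<le> X (False, n) \<omega>}" for n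
  have rv: "random_variable (count_space UNIV) (X i)" for i
    using indep unfolding indep_vars_def by (cases i) simp
  have both_ge: "prob {\<omega>\<in>space M. k \<le> X (True, n) \<omega> \<and> k \<le> X (False, n) \<omega>}
      = prob {\<omega>\<in>space M. k \<le> X (True, 0) \<omega>} ^ 2" for k n
    using indep ident rv by (rule prob_both_ge_eq_square) auto
  have "random_variable (count_space UNIV) (\<lambda>\<omega>. min (X (True, 0) \<omega>) (X (False, 0) \<omega>))"
    using rv[of "(True, 0)"] rv[of "(False, 0)"] by measurable
  then have "(\<Sum>n. ennreal (prob (A (Suc n))))
      = (\<integral>\<^sup>+ \<omega>. ennreal (real (min (X (True, 0) \<omega>) (X (False, 0) \<omega>))) \<partial>M)"
    by (simp add: nn_integral_nat_eq_suminf_prob A_def both_ge)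
  then have "\<not> summable (\<lambda>n. prob (A (Suc n)))"
    using inf_mean suminf_ennreal2[of "\<lambda>n. prob (A (Suc n))"] by auto
  then have "\<not> summable (\<lambda>n. prob (A n))"
    by (subst (asm) summable_Suc_iff)
  with indep_events_pairs[OF indep] have "AE \<omega> in M. \<exists>\<^sub>F n in sequentially. \<omega> \<in> A n"
    unfolding A_def by (rule borel_cantelli_AE2)
  then show ?thesis
    by (rule eventually_mono) (simp add: A_def)
qed

lemma inT_nonpos_eq: "inT zs ws n m \<Longrightarrow> n \<le> 0 \<Longrightarrow> m = n"
  by (induction rule: inT.induct) auto

lemma Lambda_le_2:
  assumes "1 \<le> n" "n \<le> zs n" "n \<le> ws n"
  shows "Lambda zs ws (int n) \<le> 2"
proof -
  have "Tset zs ws (int n) \<inter> {..0} \<subseteq> {int n - int (zs n), int n - int (ws n)}"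
  proof
    fix m assume "m \<in> Tset zs ws (int n) \<inter> {..0}"
    then have "inT zs ws (int n) m" "m \<le> 0"
      by (auto simp: Tset_def)
    then show "m \<in> {int n - int (zs n), int n - int (ws n)}"
      using assms by (cases rule: inT.cases) (auto dest: inT_nonpos_eq)
  qed
  then have "Lambda zs ws (int n) \<le> card {int n - int (zs n), int n - int (ws n)}"
    unfolding Lambda_def by (intro card_mono) auto
  also have "\<dots> \<le> 2"
    by (simp add: card_insert_le_m1)
  finally show ?thesis .
qed

lemma liminf_Lambda_lt_infinity:
  assumes "\<exists>\<^sub>F n in sequentially. n \<le> zs n \<and> n \<le> ws n"
  shows "liminf (\<lambda>n::nat. ereal (real (Lambda zs ws (int n)))) < \<infinity>"
proof -
  have "\<exists>\<^sub>F n in sequentially. (n \<le> zs n \<and> n \<le> ws n) \<and> 1 \<le> n"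
    using assms by (rule frequently_eventually_frequently) (simp add: eventually_ge_at_top)
  then have "\<exists>\<^sub>F n in sequentially. ereal (real (Lambda zs ws (int n))) \<le> 2"
    by (rule frequently_elim1) (simp add: Lambda_le_2)
  then have "liminf (\<lambda>n. ereal (real (Lambda zs ws (int n)))) \<le> 2"
    by (rule Liminf_le_if_frequently)
  then show ?thesis
    by (rule le_less_trans) simp
qed

theorem theorem2:
  fixes M :: "'a measure"
    and Z W :: "'a \<Rightarrow> nat"
    and Zs Ws :: "nat \<Rightarrow> 'a \<Rightarrow> nat"
  assumes "prob_space M"
    and indep: "prob_space.indep_vars M (\<lambda>_. count_space UNIV) (fam Z W Zs Ws) UNIV"
    and ident: "\<And>i. distr M (count_space UNIV) (fam Z W Zs Ws i) = distr M (count_space UNIV) Z"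
    and pos: "\<And>i \<omega>. \<omega> \<in> space M \<Longrightarrow> fam Z W Zs Ws i \<omega> \<ge> 1"
    and inf_mean: "(\<integral>\<^sup>+ \<omega>. ennreal (real (min (Z \<omega>) (W \<omega>))) \<partial>M) = \<infinity>"
  shows "AE \<omega> in M. liminf (\<lambda>n::nat. ereal (real (Lambda (\<lambda>k. Zs k \<omega>) (\<lambda>k. Ws k \<omega>) (int n)))) < \<infinity>"
proof -
  interpret prob_space M by fact
  have fam0: "fam Z W Zs Ws (True, 0) = Z" "fam Z W Zs Ws (False, 0) = W"
    by (simp_all add: fam_def)
  have "AE \<omega> in M. \<exists>\<^sub>F n in sequentially.
      n \<le> fam Z W Zs Ws (True, n) \<omega> \<and> n \<le> fam Z W Zs Ws (False, n) \<omega>"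
    using indep ident inf_mean by (intro AE_frequently_pair_ge_index) (simp_all add: fam0)
  then show ?thesis
  proof (rule eventually_mono)
    fix \<omega> assume "\<exists>\<^sub>F n in sequentially. n \<le> fam Z W Zs Ws (True, n) \<omega> \<and> n \<le> fam Z W Zs Ws (False, n) \<omega>"
    then have "\<exists>\<^sub>F n in sequentially. n \<le> Zs n \<omega> \<and> n \<le> Ws n \<omega>"
      by (rule frequently_elim1) (simp add: fam_def split: if_splits)
    then show "liminf (\<lambda>n. ereal (real (Lambda (\<lambda>k. Zs k \<omega>) (\<lambda>k. Ws k \<omega>) (int n)))) < \<infinity>"
      by (rule liminf_Lambda_lt_infinity)
  qed
qed

end
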